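(* Under the hypothesis that $\sum_{k=1}^\infty\bar\lambda^X_k\mathbf 1(\bar\lambda^X_k<e^{-x})=\varphi(x)$, $x\ge0$, for some slowly varying function $\varphi$, for every $\varepsilon\in(0,1)$ the sequence $(\ln n^{X_d}(\varepsilon))_{d\in\mathbb N}$ is rapidly varying: $$\lim_{d\to\infty}\frac{\ln n^{X_{\lfloor cd\rfloor}}(\varepsilon)}{\ln n^{X_d}(\varepsilon)}=\infty\quad\text{for all }c>1.$$
   Context: Let $X$ be a centered random element of a separable Hilbert space $H$ with $\mathbb E\|X\|^2<\infty$, covariance eigenvalues $\lambda^X_1\ge\lambda^X_2\ge\dots\ge0$ (with multiplicity, padded with zeros), $\lambda^X_1>0$, trace $\Lambda^X$, and $\bar\lambda^X_k=\lambda^X_k/\Lambda^X$. $X_d=X^{\otimes d}$ is the centered random element of $H^{\otimes d}$ with covariance operator $(K^X)^{\otimes d}$; its eigenvalues are $\prod_{j=1}^d\lambda^X_{k_j}$. With $\bar\lambda^{X_d}_k$ the normalized nonincreasing eigenvalues of $X_d$, $n^{X_d}(\varepsilon)=\min\{n\in\mathbb N:\sum_{k>n}\bar\lambda^{X_d}_k\le\varepsilon^2\}$. A slowly varying function is a positive measurable $\varphi$ on some $[T,\infty)$ with $\varphi(cx)/\varphi(x)\to1$ as $x\to\infty$ for every $c>0$. $\lfloor\cdot\rfloor$ is the floor function. *)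

theory Defs
  imports "HOL-Analysis.Analysis"
begin

text \<open>Eigenvalues of the covariance of X are given as a sequence lam :: nat => real,
  0-indexed: lam 0 is lambda_1. Trace Lambda = suminf lam.\<close>

definition trace_ev :: "(nat \<Rightarrow> real) \<Rightarrow> real" where
  "trace_ev lam = (\<Sum>k. lam k)"

definition norm_ev :: "(nat \<Rightarrow> real) \<Rightarrow> nat \<Rightarrow> real" where
  "norm_ev lam k = lam k / trace_ev lam"

text \<open>Nonincreasing rearrangement (0-indexed, counted with multiplicity) of a
  nonnegative family f on an index set A: the k-th largest value.\<close>

definition dec_rearr :: "'i set \<Rightarrow> ('i \<Rightarrow> real) \<Rightarrow> nat \<Rightarrow> real" where
  "dec_rearr A f k = Inf {t. 0 \<le> t \<and> finite {i\<in>A. f i > t} \<and> card {i\<in>A. f i > t} \<le> k}"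

text \<open>Eigenvalues of X_d = X^{\<otimes>d}: indexed by tuples (k_1..k_d), i.e. lists of length d;
  normalized eigenvalue is the product of the normalized eigenvalues of X.\<close>

definition tensor_index :: "nat \<Rightarrow> nat list set" where
  "tensor_index d = {ks. length ks = d}"

definition tensor_norm_ev :: "(nat \<Rightarrow> real) \<Rightarrow> nat \<Rightarrow> nat \<Rightarrow> real" where
  "tensor_norm_ev lam d = dec_rearr (tensor_index d) (\<lambda>ks. prod_list (map (norm_ev lam) ks))"

text \<open>Tail sum  sum_{k>n} barlambda^{X_d}_k (1-indexed) = sum over 0-indexed k >= n.\<close>

definition tensor_tail :: "(nat \<Rightarrow> real) \<Rightarrow> nat \<Rightarrow> nat \<Rightarrow> real" where
  "tensor_tail lam d n = (\<Sum>k. tensor_norm_ev lam d (k + n))"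

definition n_X :: "(nat \<Rightarrow> real) \<Rightarrow> nat \<Rightarrow> real \<Rightarrow> nat" where
  "n_X lam d \<epsilon> = (LEAST n. tensor_tail lam d n \<le> \<epsilon>\<^sup>2)"

definition slowly_varying :: "real \<Rightarrow> (real \<Rightarrow> real) \<Rightarrow> bool" where
  "slowly_varying T \<phi> \<longleftrightarrow> (\<forall>x\<ge>T. \<phi> x > 0) \<and>
     \<phi> \<in> borel_measurable (restrict_space borel {T..}) \<and>
     (\<forall>c>0. ((\<lambda>x. \<phi> (c * x) / \<phi> x) \<longlongrightarrow> 1) at_top)"

end

theory Submission
  imports Defs
begin

(*
  This yields the exact tail formula and two counting bounds for n_X:
       n_X <= exp t      if (1 - phi s)^d - d * entropy(s) / t >= 1 - eps^2   (Markov),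
       n_X >= eta e^y    if (1 - phi y)^D <= 1 - eps^2 - eta.
  3. Analytic input: a Karamata-type bound sum_{i<j} phi(i) = O(j phi(j)) for functions
     decaying at most by 5/4 under doubling, and a layer-cake bound entropy(j) <= sum_{i<j} phi(i).
  4. Under slow variation (locale sv_eigen_seq): choose the level j where d phi(j) crosses
     A / r (A = -ln(1-eps^2), r = c^(1/4)).  Then ln n_X(d) <= M j while
     ln n_X(floor(c d)) >= K j + O(1) for arbitrary K, which gives the corollary.
*)

lemma obtain_sorted_enumeration:
  fixes f :: "'i \<Rightarrow> real"
  assumes "finite S"
  obtains xs where "distinct xs" "set xs = S"
    "\<And>i l. i \<le> l \<Longrightarrow> l < length xs \<Longrightarrow> f (xs!l) \<le> f (xs!i)"
proof -
  obtain ys where ys: "distinct ys" "set ys = S"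
    using finite_distinct_list[OF assms] by blast
  let ?xs = "sort_key (\<lambda>i. - f i) ys"
  have sorted: "sorted (map (\<lambda>i. - f i) ?xs)" by (rule sorted_sort_key)
  have "f (?xs!l) \<le> f (?xs!i)" if "i \<le> l" "l < length ?xs" for i l
    using sorted_nth_mono[OF sorted, of i l] that by simp
  moreover have "distinct ?xs" "set ?xs = S" using ys by simp_all
  ultimately show ?thesis using that by blast
qed

lemma sum_distinct_list_nth:
  fixes f :: "'i \<Rightarrow> real"
  assumes "distinct xs"
  shows "sum f (set xs) = (\<Sum>j<length xs. f (xs!j))"
  using assms by (simp add: sum_list_distinct_conv_sum_set[symmetric] sum_list_sum_nth atLeast0LessThan)

locale weight_family =
  fixes A :: "'i set" and f :: "'i \<Rightarrow> real"
  assumes nonneg: "\<And>i. i \<in> A \<Longrightarrow> 0 \<le> f i"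
    and finite_superlevel: "\<And>t. t > 0 \<Longrightarrow> finite {i\<in>A. f i > t}"
    and finite_sum_le_1: "\<And>S. finite S \<Longrightarrow> S \<subseteq> A \<Longrightarrow> sum f S \<le> 1"
begin

definition rank_bounds :: "nat \<Rightarrow> real set" where
  "rank_bounds k = {t. 0 \<le> t \<and> finite {i\<in>A. f i > t} \<and> card {i\<in>A. f i > t} \<le> k}"

lemma dec_rearr_eq_Inf: "dec_rearr A f k = Inf (rank_bounds k)"
  unfolding dec_rearr_def rank_bounds_def by simp

lemma weight_le_1: "i \<in> A \<Longrightarrow> f i \<le> 1"
  using finite_sum_le_1[of "{i}"] by simp

lemma one_in_rank_bounds: "1 \<in> rank_bounds k"
proof -
  have empty: "{i\<in>A. f i > 1} = {}" using weight_le_1 by force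
  show ?thesis unfolding rank_bounds_def mem_Collect_eq empty by simp
qed

lemma dec_rearr_nonneg: "dec_rearr A f k \<ge> 0"
  unfolding dec_rearr_eq_Inf
proof (rule cInf_greatest)
  show "rank_bounds k \<noteq> {}" using one_in_rank_bounds by blast
qed (auto simp: rank_bounds_def)

lemma dec_rearr_le: "t \<in> rank_bounds k \<Longrightarrow> dec_rearr A f k \<le> t"
  unfolding dec_rearr_eq_Inf
  by (rule cInf_lower) (auto simp: rank_bounds_def intro!: bdd_belowI[of _ 0])

lemma dec_rearr_ge:
  assumes "t > 0" "k < card {i\<in>A. f i > t}"
  shows "dec_rearr A f k \<ge> t"
  unfolding dec_rearr_eq_Inf
proof (rule cInf_greatest)
  show "rank_bounds k \<noteq> {}" using one_in_rank_bounds by blast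
  fix s assume s: "s \<in> rank_bounds k"
  show "t \<le> s"
  proof (rule ccontr)
    assume "\<not> t \<le> s"
    hence "card {i\<in>A. f i > t} \<le> card {i\<in>A. f i > s}"
      using s by (intro card_mono) (auto simp: rank_bounds_def)
    thus False using s assms by (auto simp: rank_bounds_def)
  qed
qed

lemma rank_less_card:
  assumes "u > 0" "dec_rearr A f k > u"
  shows "k < card {i\<in>A. f i > u}"
proof (rule ccontr)
  assume "\<not> ?thesis"
  hence "u \<in> rank_bounds k" using assms finite_superlevel unfolding rank_bounds_def by auto
  from dec_rearr_le[OF this] assms show False by simp
qed

lemma sum_le_rearr_prefix:
  assumes "finite S" "S \<subseteq> A"
  shows "sum f S \<le> (\<Sum>k<card S. dec_rearr A f k)"
proof -
  obtain xs where xs: "distinct xs" "set xs = S"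
    and sorted: "\<And>i l. i \<le> l \<Longrightarrow> l < length xs \<Longrightarrow> f (xs!l) \<le> f (xs!i)"
    using obtain_sorted_enumeration[OF assms(1), of f] by blast
  have "f (xs!j) \<le> dec_rearr A f j" if j: "j < length xs" for j
  proof (cases "f (xs!j) > 0")
    case False thus ?thesis using dec_rearr_nonneg[of j] by linarith
  next
    case True
    show ?thesis
    proof (rule dense_le_bounded[OF True])
      fix t assume t: "0 < t" "t < f (xs!j)"
      have "(\<lambda>l. xs!l) ` {..j} \<subseteq> {i\<in>A. f i > t}"
        using sorted[OF _ j] t j xs(2) assms(2) by fastforce
      moreover have "card ((\<lambda>l. xs!l) ` {..j}) = Suc j"
        using j xs(1) by (subst card_image) (auto simp: inj_on_def nth_eq_iff_index_eq)
      ultimately have "Suc j \<le> card {i\<in>A. f i > t}"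
        using card_mono[OF finite_superlevel[OF t(1)]] by metis
      thus "t \<le> dec_rearr A f j" using dec_rearr_ge[OF t(1)] by simp
    qed
  qed
  hence "sum f S \<le> (\<Sum>j<length xs. dec_rearr A f j)"
    using sum_distinct_list_nth[OF xs(1), of f] xs(2) by (auto intro!: sum_mono)
  thus ?thesis using xs distinct_card by fastforce
qed

lemma rearr_prefix_le_superlevel_sum:
  assumes "u > 0"
  shows "(\<Sum>k<card {i\<in>A. f i > u}. dec_rearr A f k) \<le> sum f {i\<in>A. f i > u}"
proof -
  let ?C = "{i\<in>A. f i > u}"
  obtain xs where xs: "distinct xs" "set xs = ?C"
    and sorted: "\<And>i l. i \<le> l \<Longrightarrow> l < length xs \<Longrightarrow> f (xs!l) \<le> f (xs!i)"
    using obtain_sorted_enumeration[OF finite_superlevel[OF assms], of f] by blast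
  have "dec_rearr A f j \<le> f (xs!j)" if j: "j < length xs" for j
  proof (rule dec_rearr_le)
    have xj: "xs!j \<in> ?C" using j xs(2) nth_mem by blast
    have "{i\<in>A. f i > f (xs!j)} \<subseteq> (\<lambda>l. xs!l) ` {..<j}"
    proof
      fix i assume i: "i \<in> {i\<in>A. f i > f (xs!j)}"
      hence "i \<in> set xs" using xj xs(2) by auto
      then obtain l where l: "l < length xs" "i = xs!l" by (metis in_set_conv_nth)
      have "l < j"
      proof (rule ccontr)
        assume "\<not> l < j"
        with sorted[of j l] i l show False by auto
      qed
      thus "i \<in> (\<lambda>l. xs!l) ` {..<j}" using l by auto
    qed
    hence "card {i\<in>A. f i > f (xs!j)} \<le> card ((\<lambda>l. xs!l) ` {..<j})"
      by (intro card_mono) auto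
    also have "\<dots> \<le> j" using card_image_le[of "{..<j}"] by simp
    finally have "card {i\<in>A. f i > f (xs!j)} \<le> j" .
    thus "f (xs!j) \<in> rank_bounds j"
      unfolding rank_bounds_def using xj assms finite_superlevel by auto
  qed
  hence "(\<Sum>j<length xs. dec_rearr A f j) \<le> sum f ?C"
    using sum_distinct_list_nth[OF xs(1), of f] xs(2) by (auto intro!: sum_mono)
  thus ?thesis using xs distinct_card by fastforce
qed

lemma rearr_prefix_bound:
  assumes u: "u > 0"
  shows "(\<Sum>k<n. dec_rearr A f k) \<le> sum f {i\<in>A. f i > u} + n * u"
proof -
  let ?m = "card {i\<in>A. f i > u}"
  have "(\<Sum>k<n. dec_rearr A f k) \<le> (\<Sum>k<n. (if dec_rearr A f k > u then dec_rearr A f k else 0) + u)"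
    by (intro sum_mono) (use u in auto)
  also have "\<dots> = (\<Sum>k<n. (if dec_rearr A f k > u then dec_rearr A f k else 0)) + n * u"
    by (simp add: sum.distrib)
  also have "(\<Sum>k<n. (if dec_rearr A f k > u then dec_rearr A f k else 0))
      = (\<Sum>k\<in>{k\<in>{..<n}. dec_rearr A f k > u}. dec_rearr A f k)"
    by (rule sum.inter_filter[symmetric]) simp
  also have "(\<Sum>k\<in>{k\<in>{..<n}. dec_rearr A f k > u}. dec_rearr A f k) \<le> (\<Sum>k<?m. dec_rearr A f k)"
    by (rule sum_mono2) (use rank_less_card[OF u] dec_rearr_nonneg in auto)
  also have "\<dots> \<le> sum f {i\<in>A. f i > u}" by (rule rearr_prefix_le_superlevel_sum[OF u])
  finally show ?thesis by simp
qed

lemma rearr_prefix_le_1: "(\<Sum>k<n. dec_rearr A f k) \<le> 1"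
proof (rule field_le_epsilon)
  fix \<delta> :: real assume \<delta>: "\<delta> > 0"
  define u where "u = \<delta> / (n + 1)"
  have u: "u > 0" "n * u \<le> \<delta>" using \<delta> by (auto simp: u_def field_simps)
  have "(\<Sum>k<n. dec_rearr A f k) \<le> sum f {i\<in>A. f i > u} + n * u"
    by (rule rearr_prefix_bound[OF u(1)])
  moreover have "sum f {i\<in>A. f i > u} \<le> 1"
    by (rule finite_sum_le_1[OF finite_superlevel[OF u(1)]]) auto
  ultimately show "(\<Sum>k<n. dec_rearr A f k) \<le> 1 + \<delta>" using u(2) by linarith
qed

lemma rearr_summable: "summable (dec_rearr A f)"
  by (rule summableI_nonneg_bounded[OF dec_rearr_nonneg rearr_prefix_le_1])

lemma rearr_suminf_eq_1:
  assumes approx: "\<And>\<delta>. \<delta> > 0 \<Longrightarrow> \<exists>S. finite S \<and> S \<subseteq> A \<and> sum f S \<ge> 1 - \<delta>"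
  shows "suminf (dec_rearr A f) = 1"
proof (rule antisym)
  show "suminf (dec_rearr A f) \<le> 1"
    by (rule suminf_le_const[OF rearr_summable rearr_prefix_le_1])
  show "1 \<le> suminf (dec_rearr A f)"
  proof (rule field_le_epsilon)
    fix \<delta> :: real assume "\<delta> > 0"
    then obtain S where S: "finite S" "S \<subseteq> A" "sum f S \<ge> 1 - \<delta>" using approx by blast
    have "sum f S \<le> suminf (dec_rearr A f)"
      using sum_le_rearr_prefix[OF S(1,2)] sum_le_suminf[OF rearr_summable, of "{..<card S}"]
        dec_rearr_nonneg by fastforce
    thus "1 \<le> suminf (dec_rearr A f) + \<delta>" using S(3) by linarith
  qed
qed

end

text \<open>Words of length d over an alphabet F; they index the eigenvalues of X_d with all
  factors taken from F.\<close>

definition words :: "'a set \<Rightarrow> nat \<Rightarrow> 'a list set" where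
  "words F d = {xs. set xs \<subseteq> F \<and> length xs = d}"

lemma finite_words: "finite F \<Longrightarrow> finite (words F d)"
  unfolding words_def by (rule finite_lists_length_eq)

lemma words_0: "words F 0 = {[]}"
  unfolding words_def by auto

lemma words_Suc: "words F (Suc d) = (\<lambda>(k, ks). k # ks) ` (F \<times> words F d)"
  unfolding words_def by (auto simp: length_Suc_conv image_iff)

lemma inj_on_Cons_pair: "inj_on (\<lambda>(k, ks). k # ks) X"
  by (auto simp: inj_on_def)

lemma sum_words_Suc:
  fixes G :: "'a list \<Rightarrow> real"
  assumes "finite F"
  shows "(\<Sum>ks\<in>words F (Suc d). G ks) = (\<Sum>k\<in>F. \<Sum>ks\<in>words F d. G (k # ks))"
proof -
  have "(\<Sum>ks\<in>words F (Suc d). G ks) = (\<Sum>p\<in>F \<times> words F d. G ((\<lambda>(k, ks). k # ks) p))"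
    unfolding words_Suc by (rule sum.reindex[OF inj_on_Cons_pair, unfolded comp_def])
  thus ?thesis by (simp add: sum.cartesian_product case_prod_unfold)
qed

lemma sum_words_prod:
  fixes g :: "'a \<Rightarrow> real"
  assumes "finite F"
  shows "(\<Sum>ks\<in>words F d. prod_list (map g ks)) = (sum g F) ^ d"
proof (induction d)
  case 0 thus ?case by (simp add: words_0)
next
  case (Suc d)
  have "(\<Sum>ks\<in>words F (Suc d). prod_list (map g ks))
      = sum g F * (\<Sum>ks\<in>words F d. prod_list (map g ks))"
    by (simp add: sum_words_Suc[OF assms] sum_product)
  thus ?case using Suc by simp
qed

lemma sum_words_additive_cost:
  fixes g h :: "'a \<Rightarrow> real"
  assumes F: "finite F" and g: "\<And>k. k \<in> F \<Longrightarrow> g k \<ge> 0" and h: "\<And>k. k \<in> F \<Longrightarrow> h k \<ge> 0"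
    and g_le_1: "sum g F \<le> 1"
  shows "(\<Sum>ks\<in>words F d. prod_list (map g ks) * sum_list (map h ks)) \<le> d * (\<Sum>k\<in>F. g k * h k)"
proof (induction d)
  case 0 thus ?case by (simp add: words_0)
next
  case (Suc d)
  let ?P = "\<lambda>ks. prod_list (map g ks)" and ?H = "\<lambda>ks. sum_list (map h ks)"
  let ?E = "\<Sum>k\<in>F. g k * h k"
  have g0: "sum g F \<ge> 0" using g by (simp add: sum_nonneg)
  have mass_le_1: "(\<Sum>ks\<in>words F d. ?P ks) \<le> 1"
    unfolding sum_words_prod[OF F] using g0 g_le_1 by (simp add: power_le_one)
  have E0: "?E \<ge> 0" using g h by (simp add: sum_nonneg)
  have cost0: "(\<Sum>ks\<in>words F d. ?P ks * ?H ks) \<ge> 0"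
    using g h by (intro sum_nonneg mult_nonneg_nonneg prod_list_nonneg sum_list_nonneg)
      (auto simp: words_def)
  have "(\<Sum>ks\<in>words F (Suc d). ?P ks * ?H ks)
      = (\<Sum>k\<in>F. \<Sum>ks\<in>words F d. (g k * h k) * ?P ks + g k * (?P ks * ?H ks))"
    by (simp add: sum_words_Suc[OF F] algebra_simps)
  also have "\<dots> = ?E * (\<Sum>ks\<in>words F d. ?P ks) + sum g F * (\<Sum>ks\<in>words F d. ?P ks * ?H ks)"
    by (simp add: sum.distrib sum_product)
  also have "\<dots> \<le> ?E * 1 + 1 * (d * ?E)"
  proof (rule add_mono)
    show "?E * (\<Sum>ks\<in>words F d. ?P ks) \<le> ?E * 1" by (rule mult_left_mono[OF mass_le_1 E0])
    show "sum g F * (\<Sum>ks\<in>words F d. ?P ks * ?H ks) \<le> 1 * (d * ?E)"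
      using Suc g0 g_le_1 cost0 by (intro mult_mono) auto
  qed
  finally show ?case by (simp add: algebra_simps)
qed

lemma prod_list_le_1:
  fixes g :: "'a \<Rightarrow> real"
  assumes "\<And>x. x \<in> set xs \<Longrightarrow> 0 \<le> g x \<and> g x \<le> 1"
  shows "prod_list (map g xs) \<le> 1"
  using assms
proof (induction xs)
  case (Cons x xs)
  have "0 \<le> prod_list (map g xs)" using Cons.prems by (intro prod_list_nonneg) auto
  thus ?case using Cons by (auto intro: mult_le_one)
qed simp

lemma prod_list_le_nth:
  fixes g :: "'a \<Rightarrow> real"
  assumes "\<And>x. x \<in> set xs \<Longrightarrow> 0 \<le> g x \<and> g x \<le> 1" "i < length xs"
  shows "prod_list (map g xs) \<le> g (xs!i)"
  using assms
proof (induction xs arbitrary: i)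
  case Nil thus ?case by simp
next
  case (Cons x xs)
  have p0: "0 \<le> prod_list (map g xs)" using Cons.prems(1) by (intro prod_list_nonneg) auto
  have p1: "prod_list (map g xs) \<le> 1" using Cons.prems(1) by (intro prod_list_le_1) auto
  show ?case
  proof (cases i)
    case 0 thus ?thesis using Cons.prems(1)[of x] p1 by (simp add: mult_left_le)
  next
    case (Suc j)
    have "prod_list (map g xs) \<le> g (xs!j)" using Cons Suc by auto
    moreover have "g x * prod_list (map g xs) \<le> prod_list (map g xs)"
      using Cons.prems(1)[of x] p0 by (intro mult_left_le_one_le) auto
    ultimately show ?thesis using Suc by simp
  qed
qed

lemma prod_list_exp: "prod_list (map (\<lambda>k. exp ((f :: 'a \<Rightarrow> real) k)) ks) = exp (sum_list (map f ks))"
  by (induction ks) (simp_all add: exp_add)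

lemma card_below_ge:
  assumes "0 \<le> h" "h \<le> real j"
  shows "h \<le> real (card {i\<in>{..<j}. real i < h})"
proof -
  define n where "n = nat \<lceil>h\<rceil>"
  have "{..<n} \<subseteq> {i\<in>{..<j}. real i < h}"
  proof
    fix i assume "i \<in> {..<n}"
    hence "i < n" by simp
    hence "real i \<le> real_of_int \<lceil>h\<rceil> - 1" "i < j" unfolding n_def using assms by linarith+
    thus "i \<in> {i\<in>{..<j}. real i < h}" by simp linarith
  qed
  hence "n \<le> card {i\<in>{..<j}. real i < h}"
    using card_mono[of "{i\<in>{..<j}. real i < h}" "{..<n}"] by simp
  thus ?thesis using assms(1) unfolding n_def by linarith
qed

text \<open>The eigenvalue sequence lam of X: nonnegative, summable, lam 0 > 0.  mu are the normalized eigenvalues and weight ks the normalized eigenvalue of X_d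
  indexed by the word ks.\<close>

locale eigen_seq =
  fixes lam :: "nat \<Rightarrow> real"
  assumes nonneg: "\<And>k. lam k \<ge> 0"
    and summable_lam: "summable lam"
    and pos: "lam 0 > 0"
begin

abbreviation mu :: "nat \<Rightarrow> real" where "mu \<equiv> norm_ev lam"

abbreviation weight :: "nat list \<Rightarrow> real" where "weight ks \<equiv> prod_list (map mu ks)"

lemma trace_pos: "trace_ev lam > 0"
  using sum_le_suminf[OF summable_lam, of "{0}"] nonneg pos unfolding trace_ev_def by simp

lemma mu_nonneg: "mu k \<ge> 0"
  unfolding norm_ev_def using nonneg trace_pos by simp

lemma mu_sums: "mu sums 1"
  using sums_divide[OF summable_sums[OF summable_lam], of "trace_ev lam"] trace_pos
  unfolding norm_ev_def trace_ev_def by simp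

lemma mu_summable: "summable mu"
  using mu_sums sums_summable by blast

lemma mu_partial_le_1: "finite F \<Longrightarrow> sum mu F \<le> 1"
  using sum_le_suminf[OF mu_summable, of F] mu_nonneg sums_unique[OF mu_sums] by simp

lemma mu_le_1: "mu k \<le> 1"
  using mu_partial_le_1[of "{k}"] by simp

lemma finite_mu_superlevel: "t > 0 \<Longrightarrow> finite {k. mu k > t}"
proof -
  assume t: "t > 0"
  obtain N where N: "\<And>k. k \<ge> N \<Longrightarrow> mu k < t"
    using order_tendstoD(2)[OF summable_LIMSEQ_zero[OF mu_summable] t]
    unfolding eventually_sequentially by blast
  have "{k. mu k > t} \<subseteq> {..<N}" using N by (force simp: not_less[symmetric])
  thus ?thesis using finite_subset by blast
qed

lemma weight_nonneg: "weight ks \<ge> 0"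
  by (intro prod_list_nonneg) (auto simp: mu_nonneg)

lemma weight_le_letter: "k \<in> set ks \<Longrightarrow> weight ks \<le> mu k"
  by (metis in_set_conv_nth prod_list_le_nth mu_nonneg mu_le_1)

lemma words_subset_tensor_index: "words F d \<subseteq> tensor_index d"
  by (auto simp: words_def tensor_index_def)

text \<open>Every finite set of tensor indices lies in the words of length d over some finite
  alphabet, whose total weight is a power of a partial sum of mu.\<close>

lemma tensor_index_finite_sum_le_1:
  assumes "finite S" "S \<subseteq> tensor_index d"
  shows "sum weight S \<le> 1"
proof -
  define M where "M = Suc (Max (insert 0 (\<Union>ks\<in>S. set ks)))"
  have "S \<subseteq> words {..<M} d"
  proof
    fix ks assume ks: "ks \<in> S"
    have "\<forall>x\<in>set ks. x < M"
      using ks Max_ge[of "insert 0 (\<Union>ks\<in>S. set ks)"] assms(1)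
      unfolding M_def by (meson UN_I finite_UN_I finite_insert finite_set insertCI le_imp_less_Suc)
    thus "ks \<in> words {..<M} d" using ks assms(2) by (auto simp: words_def tensor_index_def)
  qed
  hence "sum weight S \<le> sum weight (words {..<M} d)"
    by (intro sum_mono2 finite_words weight_nonneg) auto
  also have "\<dots> = (sum mu {..<M}) ^ d" by (rule sum_words_prod) simp
  also have "\<dots> \<le> 1" by (intro power_le_one sum_nonneg mu_nonneg mu_partial_le_1) auto
  finally show ?thesis .
qed

lemma tensor_weight_family: "weight_family (tensor_index d) weight"
proof
  fix t :: real assume t: "t > 0"
  have "{ks\<in>tensor_index d. weight ks > t} \<subseteq> words {k. mu k > t} d"
    unfolding words_def tensor_index_def using weight_le_letter by fastforce
  thus "finite {ks\<in>tensor_index d. weight ks > t}"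
    using finite_words[OF finite_mu_superlevel[OF t]] finite_subset by blast
qed (auto simp: weight_nonneg tensor_index_finite_sum_le_1)

text \<open>Words over a large initial alphabet exhaust the total mass 1.\<close>

lemma tensor_weight_approx:
  assumes "\<delta> > 0"
  shows "\<exists>S. finite S \<and> S \<subseteq> tensor_index d \<and> sum weight S \<ge> 1 - \<delta>"
proof -
  have "(\<lambda>M. (sum mu {..<M}) ^ d) \<longlonglongrightarrow> 1 ^ d"
    using mu_sums unfolding sums_def by (intro tendsto_power)
  then obtain M where M: "(sum mu {..<M}) ^ d > 1 - \<delta>"
    using order_tendstoD(1)[of _ "1 ^ d" sequentially "1 - \<delta>"] assms
    unfolding eventually_sequentially by force
  show ?thesis
    using M sum_words_prod[of "{..<M}" mu d] words_subset_tensor_index finite_words[of "{..<M}"]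
    by (intro exI[of _ "words {..<M} d"]) auto
qed

abbreviation tensor_ev :: "nat \<Rightarrow> nat \<Rightarrow> real" where
  "tensor_ev d \<equiv> dec_rearr (tensor_index d) weight"

lemma tensor_norm_ev_eq: "tensor_norm_ev lam d = tensor_ev d"
  unfolding tensor_norm_ev_def by simp

text \<open>The tail of the eigenvalues of X_d is one minus the prefix sum, since the total is 1.\<close>

lemma tensor_tail_eq: "tensor_tail lam d n = 1 - (\<Sum>k<n. tensor_ev d k)"
proof -
  interpret weight_family "tensor_index d" weight by (rule tensor_weight_family)
  have "suminf (tensor_ev d) = (\<Sum>k. tensor_ev d (k + n)) + sum (tensor_ev d) {..<n}"
    by (rule suminf_split_initial_segment[OF rearr_summable])
  thus ?thesis
    using rearr_suminf_eq_1[OF tensor_weight_approx]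
    unfolding tensor_tail_def tensor_norm_ev_eq by simp
qed

lemma n_X_le_card:
  assumes "finite S" "S \<subseteq> tensor_index d" "sum weight S \<ge> 1 - \<epsilon>^2"
  shows "n_X lam d \<epsilon> \<le> card S"
proof -
  interpret weight_family "tensor_index d" weight by (rule tensor_weight_family)
  have "tensor_tail lam d (card S) \<le> \<epsilon>^2"
    using sum_le_rearr_prefix[OF assms(1,2)] assms(3) tensor_tail_eq by simp
  thus ?thesis unfolding n_X_def by (rule Least_le)
qed

lemma n_X_tail:
  assumes "\<epsilon> > 0"
  shows "tensor_tail lam d (n_X lam d \<epsilon>) \<le> \<epsilon>^2"
proof -
  interpret weight_family "tensor_index d" weight by (rule tensor_weight_family)
  obtain S where S: "finite S" "S \<subseteq> tensor_index d" "sum weight S \<ge> 1 - \<epsilon>^2"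
    using tensor_weight_approx[of "\<epsilon>^2" d] assms by auto
  have "tensor_tail lam d (card S) \<le> \<epsilon>^2"
    using sum_le_rearr_prefix[OF S(1,2)] S(3) tensor_tail_eq by simp
  thus ?thesis unfolding n_X_def by (rule LeastI)
qed

text \<open>Lower bound: if the tensor indices of weight above u carry mass at most
  1 - eps^2 - eta, then the remaining mass eta has to be collected from eigenvalues of size at
  most u, which needs at least eta / u of them.\<close>

lemma n_X_ge_level:
  assumes u: "u > 0" and eta: "\<eta> > 0" and eps: "\<epsilon> > 0"
    and mass: "sum weight {ks\<in>tensor_index d. weight ks > u} \<le> 1 - \<epsilon>^2 - \<eta>"
  shows "real (n_X lam d \<epsilon>) \<ge> \<eta> / u"
proof -
  interpret weight_family "tensor_index d" weight by (rule tensor_weight_family)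
  let ?n = "n_X lam d \<epsilon>"
  have "1 - \<epsilon>^2 \<le> (\<Sum>k<?n. tensor_ev d k)"
    using n_X_tail[OF eps, of d] tensor_tail_eq by simp
  also have "\<dots> \<le> sum weight {ks\<in>tensor_index d. weight ks > u} + ?n * u"
    by (rule rearr_prefix_bound[OF u])
  finally have "\<eta> \<le> ?n * u" using mass by linarith
  thus ?thesis using u by (simp add: field_simps)
qed


definition small_mass :: "real \<Rightarrow> real" where
  "small_mass x = (\<Sum>k. mu k * (if mu k < exp (- x) then 1 else 0))"

definition large_idx :: "real \<Rightarrow> nat set" where
  "large_idx s = {k. mu k \<ge> exp (- s)}"

text \<open>The cost - ln mu k of a letter, so that weight ks = exp (- total cost of ks).\<close>

definition neglog :: "nat \<Rightarrow> real" where
  "neglog k = - ln (mu k)"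

definition entropy_upto :: "real \<Rightarrow> real" where
  "entropy_upto s = (\<Sum>k\<in>large_idx s. mu k * neglog k)"

lemma small_mass_summable: "summable (\<lambda>k. mu k * (if mu k < exp (- x) then 1 else 0))"
  by (rule summable_comparison_test'[OF mu_summable, of 0]) (auto simp: mu_nonneg)

lemma small_mass_nonneg: "small_mass x \<ge> 0"
  unfolding small_mass_def by (intro suminf_nonneg small_mass_summable) (auto simp: mu_nonneg)

lemma small_mass_le_1: "small_mass x \<le> 1"
  using suminf_le[OF _ small_mass_summable mu_summable] mu_nonneg sums_unique[OF mu_sums]
  unfolding small_mass_def by fastforce

lemma small_mass_antimono: "x \<le> y \<Longrightarrow> small_mass y \<le> small_mass x"
  unfolding small_mass_def
  by (intro suminf_le small_mass_summable) (auto simp: mu_nonneg order.strict_trans2)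

text \<open>By Tannery's theorem (dominated convergence for series), the mass of the eigenvalues
  below exp (- x) vanishes as x grows.\<close>

lemma small_mass_tendsto_0: "(small_mass \<longlongrightarrow> 0) at_top"
proof -
  have term_lim: "((\<lambda>x. mu k * (if mu k < exp (- x) then 1 else 0)) \<longlongrightarrow> 0) at_top" for k
  proof (cases "mu k > 0")
    case True
    have "\<forall>\<^sub>F x in at_top. exp (- x) < mu k"
      using order_tendstoD(2)[OF filterlim_compose[OF exp_at_bot filterlim_uminus_at_bot_at_top] True] .
    hence "\<forall>\<^sub>F x in at_top. mu k * (if mu k < exp (- x) then 1 else 0) = 0"
      by eventually_elim auto
    thus ?thesis by (rule tendsto_eventually)
  qed (use mu_nonneg[of k] in simp)
  have bound: "\<forall>\<^sub>F (k, x) in sequentially \<times>\<^sub>F at_top.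
      norm (mu k * (if mu k < exp (- x) then 1 else 0)) \<le> mu k"
    by (intro always_eventually) (auto simp: mu_nonneg)
  have "((\<lambda>x. \<Sum>k. mu k * (if mu k < exp (- x) then 1 else 0)) \<longlongrightarrow> (\<Sum>k. 0)) at_top"
    using tannerys_theorem[OF term_lim bound mu_summable] by simp
  thus ?thesis unfolding small_mass_def by simp
qed

lemma large_idx_finite: "finite (large_idx s)"
proof -
  have "large_idx s \<subseteq> {k. mu k > exp (- s) / 2}"
  proof
    fix k assume "k \<in> large_idx s"
    hence "exp (- s) \<le> mu k" by (simp add: large_idx_def)
    moreover have "exp (- s) / 2 < exp (- s)" by simp
    ultimately have "exp (- s) / 2 < mu k" by linarith
    thus "k \<in> {k. mu k > exp (- s) / 2}" by simp
  qed
  thus ?thesis using finite_mu_superlevel[of "exp (- s) / 2"] finite_subset by auto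
qed

lemma large_idx_pos: "k \<in> large_idx s \<Longrightarrow> mu k > 0"
  unfolding large_idx_def by (auto intro: less_le_trans[OF exp_gt_zero])

lemma neglog_bounds: "k \<in> large_idx s \<Longrightarrow> 0 \<le> neglog k \<and> neglog k \<le> s"
  using large_idx_pos[of k s] mu_le_1[of k] ln_le_cancel_iff[of "exp (- s)" "mu k"]
  unfolding neglog_def large_idx_def by auto

lemma sum_large_idx: "sum mu (large_idx s) = 1 - small_mass s"
proof -
  let ?a = "\<lambda>k. mu k * (if mu k < exp (- s) then 0 else 1)"
  let ?b = "\<lambda>k. mu k * (if mu k < exp (- s) then 1 else 0)"
  have "?a sums sum ?a (large_idx s)"
    by (rule sums_finite[OF large_idx_finite]) (auto simp: large_idx_def)
  moreover have "sum ?a (large_idx s) = sum mu (large_idx s)"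
    by (intro sum.cong) (auto simp: large_idx_def)
  ultimately have "(\<lambda>k. ?a k + ?b k) sums (sum mu (large_idx s) + small_mass s)"
    unfolding small_mass_def using sums_add summable_sums[OF small_mass_summable] by fastforce
  moreover have "(\<lambda>k. ?a k + ?b k) = mu" by (rule ext) simp
  ultimately have "sum mu (large_idx s) + small_mass s = 1"
    using sums_unique2[OF _ mu_sums] by simp
  thus ?thesis by simp
qed

lemma weight_exp_neglog: "set ks \<subseteq> large_idx s \<Longrightarrow> weight ks = exp (- sum_list (map neglog ks))"
proof -
  assume ks: "set ks \<subseteq> large_idx s"
  have "map mu ks = map (\<lambda>k. exp (- neglog k)) ks"
    using ks large_idx_pos unfolding neglog_def by (intro map_cong) auto
  hence "weight ks = prod_list (map (\<lambda>k. exp (- neglog k)) ks)" by (simp only:)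
  also have "\<dots> = exp (sum_list (map (\<lambda>k. - neglog k) ks))" by (rule prod_list_exp)
  also have "sum_list (map (\<lambda>k. - neglog k) ks) = - sum_list (map neglog ks)"
    by (induction ks) auto
  finally show ?thesis .
qed

text \<open>Among the words over the alphabet large_idx s, those of total
  cost (sum of neglog) at most t have weight at least exp (- t), so there are at most
  exp t of them; by Markov's inequality on the additive cost they still carry mass at least
  (1 - small_mass s)^d - d * entropy_upto s / t.\<close>

lemma n_X_le_exp:
  assumes t: "t > 0"
    and mass: "(1 - small_mass s)^d - d * entropy_upto s / t \<ge> 1 - \<epsilon>^2"
  shows "real (n_X lam d \<epsilon>) \<le> exp t"
proof -
  let ?L = "words (large_idx s) d"
  let ?H = "\<lambda>ks. sum_list (map neglog ks)"
  define S where "S = {ks\<in>?L. ?H ks \<le> t}"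
  have finL: "finite ?L" by (rule finite_words[OF large_idx_finite])
  have finS: "finite S" and SL: "S \<subseteq> ?L" unfolding S_def using finL by auto
  have S_index: "S \<subseteq> tensor_index d" using SL words_subset_tensor_index by blast
  have H_nonneg: "ks \<in> ?L \<Longrightarrow> ?H ks \<ge> 0" for ks
    by (intro sum_list_nonneg) (auto simp: words_def dest: neglog_bounds)
  have "sum weight (?L - S) \<le> (\<Sum>ks\<in>?L - S. weight ks * ?H ks / t)"
  proof (rule sum_mono)
    fix ks assume "ks \<in> ?L - S"
    hence "1 \<le> ?H ks / t" using t unfolding S_def by auto
    thus "weight ks \<le> weight ks * ?H ks / t"
      using weight_nonneg[of ks] mult_left_mono[of 1 "?H ks / t" "weight ks"] by simp
  qed
  also have "\<dots> \<le> (\<Sum>ks\<in>?L. weight ks * ?H ks) / t"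
    unfolding sum_divide_distrib by (rule sum_mono2[OF finL]) (use H_nonneg weight_nonneg t in auto)
  also have "\<dots> \<le> d * entropy_upto s / t"
    unfolding entropy_upto_def
    by (intro divide_right_mono sum_words_additive_cost large_idx_finite mu_partial_le_1)
      (use t neglog_bounds mu_nonneg in auto)
  finally have "sum weight (?L - S) \<le> d * entropy_upto s / t" .
  moreover have "sum weight ?L = (1 - small_mass s)^d"
    using sum_words_prod[OF large_idx_finite] sum_large_idx by simp
  moreover have "sum weight S = sum weight ?L - sum weight (?L - S)"
    using sum.subset_diff[OF SL finL, of weight] by simp
  ultimately have "sum weight S \<ge> 1 - \<epsilon>^2" using mass by linarith
  hence "n_X lam d \<epsilon> \<le> card S" by (rule n_X_le_card[OF finS S_index])
  moreover have "card S * exp (- t) \<le> 1"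
  proof -
    have "card S * exp (- t) = (\<Sum>ks\<in>S. exp (- t))" by simp
    also have "\<dots> \<le> sum weight S"
    proof (rule sum_mono)
      fix ks assume "ks \<in> S"
      hence "set ks \<subseteq> large_idx s" "?H ks \<le> t" unfolding S_def words_def by auto
      thus "exp (- t) \<le> weight ks" using weight_exp_neglog by simp
    qed
    also have "\<dots> \<le> 1" by (rule tensor_index_finite_sum_le_1[OF finS S_index])
    finally show ?thesis .
  qed
  ultimately show ?thesis by (simp add: exp_minus field_simps)
qed

text \<open>Lower bound for n_X: tensor indices of weight above exp (- y) are words over
  large_idx y, which carry mass (1 - small_mass y)^D.\<close>

lemma n_X_ge_exp:
  assumes eta: "\<eta> > 0" and eps: "\<epsilon> > 0"
    and mass: "(1 - small_mass y)^D \<le> 1 - \<epsilon>^2 - \<eta>"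
  shows "real (n_X lam D \<epsilon>) \<ge> \<eta> * exp y"
proof -
  have "{ks\<in>tensor_index D. weight ks > exp (- y)} \<subseteq> words (large_idx y) D"
    unfolding words_def tensor_index_def large_idx_def using weight_le_letter by fastforce
  hence "sum weight {ks\<in>tensor_index D. weight ks > exp (- y)} \<le> sum weight (words (large_idx y) D)"
    by (rule sum_mono2[OF finite_words[OF large_idx_finite] _ weight_nonneg])
  also have "\<dots> = (1 - small_mass y)^D"
    using sum_words_prod[OF large_idx_finite] sum_large_idx by simp
  finally have "real (n_X lam D \<epsilon>) \<ge> \<eta> / exp (- y)"
    using mass by (intro n_X_ge_level[OF exp_gt_zero eta eps]) linarith
  thus ?thesis by (simp add: exp_minus divide_inverse)
qed

text \<open>Layer-cake bound: since neglog k \<le> j on large_idx j, the entropy up to level j is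
  dominated by the sum of the small masses at the integer levels below j.\<close>

lemma entropy_le_small_mass_sum: "entropy_upto (real j) \<le> (\<Sum>i<j. small_mass (real i))"
proof -
  let ?F = "large_idx (real j)"
  let ?ind = "\<lambda>i k. if real i < neglog k then 1 else 0 :: real"
  have "entropy_upto (real j) \<le> (\<Sum>k\<in>?F. mu k * (\<Sum>i<j. ?ind i k))"
    unfolding entropy_upto_def
  proof (rule sum_mono)
    fix k assume k: "k \<in> ?F"
    have "(\<Sum>i<j. ?ind i k) = real (card {i\<in>{..<j}. real i < neglog k})"
      by (simp add: sum.If_cases Int_def conj_commute)
    moreover have "neglog k \<le> real (card {i\<in>{..<j}. real i < neglog k})"
      using neglog_bounds[OF k] by (intro card_below_ge) auto
    ultimately show "mu k * neglog k \<le> mu k * (\<Sum>i<j. ?ind i k)"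
      by (simp add: mult_left_mono mu_nonneg)
  qed
  also have "\<dots> = (\<Sum>k\<in>?F. \<Sum>i<j. mu k * ?ind i k)"
    by (simp only: sum_distrib_left)
  also have "\<dots> = (\<Sum>i<j. \<Sum>k\<in>?F. mu k * ?ind i k)"
    by (rule sum.swap)
  also have "\<dots> \<le> (\<Sum>i<j. small_mass (real i))"
  proof (rule sum_mono)
    fix i
    have "(\<Sum>k\<in>?F. mu k * ?ind i k)
        = (\<Sum>k\<in>?F. mu k * (if mu k < exp (- real i) then 1 else 0))"
    proof (rule sum.cong)
      fix k assume "k \<in> ?F"
      hence pos: "mu k > 0" by (rule large_idx_pos)
      have "real i < neglog k \<longleftrightarrow> ln (mu k) < - real i" unfolding neglog_def by linarith
      also have "\<dots> \<longleftrightarrow> mu k < exp (- real i)" using pos by (metis exp_less_cancel_iff exp_ln)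
      finally have "real i < neglog k \<longleftrightarrow> mu k < exp (- real i)" .
      thus "mu k * ?ind i k = mu k * (if mu k < exp (- real i) then 1 else 0)" by simp
    qed simp
    also have "\<dots> \<le> small_mass (real i)"
      unfolding small_mass_def
      by (rule sum_le_suminf[OF small_mass_summable large_idx_finite]) (auto simp: mu_nonneg)
    finally show "(\<Sum>k\<in>?F. mu k * ?ind i k) \<le> small_mass (real i)" .
  qed
  finally show ?thesis .
qed

end

text \<open>The arithmetic inequality behind the induction step of sum_le_of_doubling.\<close>

lemma doubling_step_arith:
  fixes C N h :: real
  assumes "C \<ge> 4" "N \<ge> 10" "2 * h \<le> N + 1" "h \<ge> 0"
  shows "5/4 * (C * h + (N - h)) \<le> C * N"
proof -
  have "5/4 * (C * h + (N - h)) = 5/4 * ((C - 1) * h + N)" by (simp add: algebra_simps)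
  also have "\<dots> \<le> 5/4 * ((C - 1) * ((N + 1) / 2) + N)"
    using assms by (intro mult_left_mono add_right_mono) auto
  also have "\<dots> \<le> C * N"
  proof -
    have "C * (3 * N - 5) \<ge> 4 * (3 * N - 5)" using assms by (intro mult_right_mono) auto
    thus ?thesis using assms(2) by (simp add: field_simps)
  qed
  finally show ?thesis .
qed

text \<open>Proof by strong induction, splitting the sum at N/2.\<close>

lemma sum_le_of_doubling:
  fixes p :: "real \<Rightarrow> real" and N1 :: nat
  assumes mono: "\<And>x y. 0 \<le> x \<Longrightarrow> x \<le> y \<Longrightarrow> p y \<le> p x"
    and nonneg: "\<And>x. p x \<ge> 0"
    and doubling: "\<And>x. x \<ge> x0 \<Longrightarrow> p x \<le> 5/4 * p (2 * x)"
    and N1: "real N1 \<ge> x0" "N1 \<ge> 10" "p (2 * real N1) > 0"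
  shows "\<exists>C>0. \<forall>N\<ge>N1. (\<Sum>i<N. p (real i)) \<le> C * real N * p (real N)"
proof -
  let ?S = "\<lambda>N. (\<Sum>i<N. p (real i))"
  define C where "C = max 4 (?S (2 * N1) / (real N1 * p (2 * real N1)))"
  have C4: "C \<ge> 4" unfolding C_def by simp
  have "?S N \<le> C * real N * p (real N)" if "N \<ge> N1" for N
    using that
  proof (induction N rule: less_induct)
    case (less N)
    show ?case
    proof (cases "N \<le> 2 * N1")
      case True
      have "?S N \<le> ?S (2 * N1)" by (rule sum_mono2) (use True nonneg in auto)
      also have "\<dots> \<le> C * (real N1 * p (2 * real N1))"
      proof -
        have pos: "real N1 * p (2 * real N1) > 0" using N1 by simp
        have "?S (2 * N1) / (real N1 * p (2 * real N1)) \<le> C" unfolding C_def by simp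
        thus ?thesis using pos by (simp add: divide_le_eq mult.commute)
      qed
      also have "\<dots> \<le> C * (real N * p (real N))"
        using less.prems True C4 nonneg by (intro mult_left_mono mult_mono mono) auto
      finally show ?thesis by (simp add: mult.assoc)
    next
      case False
      define h where "h = (N + 1) div 2"
      have hN: "h < N" "N1 \<le> h" "N \<le> 2 * h" "2 * h \<le> N + 1"
        using False N1(2) unfolding h_def by presburger+
      have p_half: "p (real h) \<le> 5/4 * p (real N)"
      proof -
        have "p (real h) \<le> 5/4 * p (2 * real h)" using doubling N1 hN by simp
        also have "p (2 * real h) \<le> p (real N)" using hN by (intro mono) auto
        finally show ?thesis by simp
      qed
      have "?S N = ?S h + (\<Sum>i\<in>{h..<N}. p (real i))"
        using hN sum.atLeastLessThan_concat[of 0 h N "\<lambda>i. p (real i)"] by (simp add: atLeast0LessThan)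
      also have "(\<Sum>i\<in>{h..<N}. p (real i)) \<le> (\<Sum>i\<in>{h..<N}. p (real h))"
        by (intro sum_mono mono) auto
      also have "?S h \<le> C * real h * p (real h)" using less.IH hN by auto
      also have "C * real h * p (real h) + (\<Sum>i\<in>{h..<N}. p (real h))
          = (C * real h + (real N - real h)) * p (real h)"
        using hN by (simp add: of_nat_diff algebra_simps)
      also have "\<dots> \<le> (C * real h + (real N - real h)) * (5/4 * p (real N))"
        by (rule mult_left_mono[OF p_half]) (use C4 hN in auto)
      also have "\<dots> = 5/4 * (C * real h + (real N - real h)) * p (real N)"
        by (simp add: field_simps)
      also have "\<dots> \<le> C * real N * p (real N)"
        by (rule mult_right_mono[OF doubling_step_arith nonneg]) (use C4 hN N1 in auto)
      finally show ?thesis by simp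
    qed
  qed
  thus ?thesis using C4 by (intro exI[of _ C]) auto
qed

lemma one_minus_pow_ge_exp:
  fixes x :: real
  assumes "0 \<le> x" "x \<le> 1/2"
  shows "(1 - x)^d \<ge> exp (- (real d * (x + 2 * x^2)))"
proof -
  have "real d * (- x - 2 * x^2) \<le> real d * ln (1 - x)"
    by (intro mult_left_mono ln_one_minus_pos_lower_bound[OF assms]) auto
  hence "exp (- (real d * (x + 2 * x^2))) \<le> exp (real d * ln (1 - x))"
    by (simp add: algebra_simps)
  also have "\<dots> = (1 - x)^d" using assms by (simp add: exp_of_nat_mult)
  finally show ?thesis .
qed

lemma one_minus_pow_le_exp:
  fixes x :: real
  assumes "0 \<le> x" "x \<le> 1"
  shows "(1 - x)^d \<le> exp (- (real d * x))"
proof -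
  have "(1 - x)^d \<le> exp (- x) ^ d"
    using exp_ge_add_one_self[of "- x"] assms by (intro power_mono) auto
  thus ?thesis by (simp add: exp_of_nat_mult[symmetric])
qed

lemma crossing_index:
  fixes p :: "nat \<Rightarrow> real"
  assumes above: "p J0 > b" and eventually_below: "\<forall>\<^sub>F j in sequentially. p j \<le> b"
  obtains j where "J0 < j" "p j \<le> b" "p (j - 1) > b"
proof -
  obtain j' where "\<forall>j\<ge>j'. p j \<le> b" using eventually_below unfolding eventually_sequentially by blast
  hence ex: "\<exists>j. J0 \<le> j \<and> p j \<le> b" by (intro exI[of _ "max J0 j'"]) auto
  define j where "j = (LEAST j. J0 \<le> j \<and> p j \<le> b)"
  have j: "J0 \<le> j" "p j \<le> b" using LeastI_ex[OF ex] unfolding j_def by auto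
  have "J0 < j" using j above by (cases "j = J0") auto
  moreover have "p (j - 1) > b"
    using not_less_Least[of "j - 1" "\<lambda>j. J0 \<le> j \<and> p j \<le> b"] \<open>J0 < j\<close>
    unfolding j_def[symmetric] by auto
  ultimately show ?thesis using j that by blast
qed

text \<open>The logarithm of a natural number is nonnegative (ln 0 = 0 in HOL).\<close>

lemma ln_real_nat_nonneg: "ln (real n) \<ge> 0"
  by (cases "n = 0") auto

lemma ln_nat_le_of_le_exp:
  fixes t :: real
  assumes "real n \<le> exp t" "t \<ge> 0"
  shows "ln (real n) \<le> t"
proof (cases "n = 0")
  case False
  hence "ln (real n) \<le> ln (exp t)" using assms(1) by (subst ln_le_cancel_iff) auto
  thus ?thesis by simp
qed (use assms in simp)

lemma ln_ge_of_mult_exp_le: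
  fixes \<eta> t x :: real
  assumes "\<eta> > 0" "\<eta> * exp t \<le> x"
  shows "ln \<eta> + t \<le> ln x"
proof -
  have "0 < \<eta> * exp t" using assms(1) by simp
  hence "0 < x" using assms(2) by linarith
  thus ?thesis using assms by (subst ln_ge_iff) (auto simp: exp_add)
qed

lemma eventually_floor_scaled_ge:
  fixes a c :: real
  assumes "a < c"
  shows "\<forall>\<^sub>F d in sequentially. a * real d \<le> real (nat \<lfloor>c * real d\<rfloor>)"
proof -
  have "\<forall>\<^sub>F d in sequentially. 1 / (c - a) \<le> real d"
    using filterlim_real_sequentially unfolding filterlim_at_top by blast
  thus ?thesis
  proof eventually_elim
    case (elim d)
    hence "1 \<le> (c - a) * real d" using assms by (simp add: pos_divide_le_eq mult.commute)
    moreover have "c * real d - 1 \<le> real (nat \<lfloor>c * real d\<rfloor>)" by linarith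
    ultimately show ?case by (simp add: algebra_simps)
  qed
qed

locale sv_eigen_seq = eigen_seq +
  fixes \<phi> :: "real \<Rightarrow> real" and T :: real
  assumes slowly_varying: "slowly_varying T \<phi>"
    and small_mass_eq: "\<And>x. x \<ge> 0 \<Longrightarrow> small_mass x = \<phi> x"
begin

lemma small_mass_pos: "x \<ge> max T 0 \<Longrightarrow> small_mass x > 0"
  using slowly_varying small_mass_eq unfolding slowly_varying_def by auto

lemma small_mass_ratio:
  assumes c: "c > 0" and \<theta>: "\<theta> < 1"
  shows "\<forall>\<^sub>F x in at_top. \<theta> * small_mass x \<le> small_mass (c * x)"
proof -
  have "((\<lambda>x. \<phi> (c * x) / \<phi> x) \<longlongrightarrow> 1) at_top"
    using slowly_varying c unfolding slowly_varying_def by blast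
  hence "\<forall>\<^sub>F x in at_top. \<theta> < \<phi> (c * x) / \<phi> x" using \<theta> by (rule order_tendstoD(1))
  moreover have "\<forall>\<^sub>F x in at_top. x \<ge> max T 0" by (rule eventually_ge_at_top)
  ultimately show ?thesis
  proof eventually_elim
    case (elim x)
    have "\<phi> x > 0" using small_mass_pos[OF elim(2)] small_mass_eq[of x] elim(2) by simp
    hence "\<theta> * \<phi> x < \<phi> (c * x)" using elim(1) by (simp add: field_simps)
    thus ?case using small_mass_eq[of x] small_mass_eq[of "c * x"] elim(2) c by simp
  qed
qed

text \<open>Regular variation makes the small masses decay slowly enough for the Karamata-type
  bound to apply at the integer points.\<close>

lemma small_mass_sum_bound:
  obtains C N1 where "C > 0"
    "\<And>N. N \<ge> N1 \<Longrightarrow> (\<Sum>i<N. small_mass (real i)) \<le> C * real N * small_mass (real N)"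
proof -
  obtain x0 where x0: "\<And>x. x \<ge> x0 \<Longrightarrow> 4/5 * small_mass x \<le> small_mass (2 * x)"
    using small_mass_ratio[of 2 "4/5"] unfolding eventually_at_top_linorder by auto
  define m where "m = max x0 (max T 0)"
  have m: "x0 \<le> m" "T \<le> m" "0 \<le> m" unfolding m_def by auto
  define N1 where "N1 = nat \<lceil>m\<rceil> + 10"
  have "m \<le> real N1" unfolding N1_def by linarith
  hence N1: "real N1 \<ge> x0" "N1 \<ge> 10" "2 * real N1 \<ge> max T 0"
    using m unfolding N1_def by auto
  have "\<exists>C>0. \<forall>N\<ge>N1. (\<Sum>i<N. small_mass (real i)) \<le> C * real N * small_mass (real N)"
  proof (rule sum_le_of_doubling[where p = small_mass])
    show "\<And>x. x \<ge> x0 \<Longrightarrow> small_mass x \<le> 5/4 * small_mass (2 * x)" using x0 by fastforce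
  qed (use small_mass_antimono small_mass_nonneg small_mass_pos N1 in auto)
  thus ?thesis using that by blast
qed

lemma n_X_upper_at_level:
  assumes eps: "0 < \<epsilon>" "\<epsilon> < 1" and b: "0 < b" "b < - ln (1 - \<epsilon>^2)"
  obtains M dmin jmin where "M > 0"
    "\<And>d j. d \<ge> dmin \<Longrightarrow> j \<ge> jmin \<Longrightarrow> real d * small_mass (real j) \<le> b \<Longrightarrow>
       real (n_X lam d \<epsilon>) \<le> exp (M * real j)"
proof -
  define A where "A = - ln (1 - \<epsilon>^2)"
  have eA: "exp (- A) = 1 - \<epsilon>^2"
    unfolding A_def using eps by (simp add: power_less_one_iff)
  define b2 where "b2 = (b + A) / 2"
  have b2: "b < b2" "b2 < A" using b unfolding b2_def A_def by auto
  define gap where "gap = exp (- b2) - exp (- A)"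
  have gap: "gap > 0" unfolding gap_def using b2 by simp
  obtain C N1 where C: "C > 0"
    and sum_bound: "\<And>N. N \<ge> N1 \<Longrightarrow> (\<Sum>i<N. small_mass (real i)) \<le> C * real N * small_mass (real N)"
    using small_mass_sum_bound by blast
  define M where "M = C * b / gap"
  define \<delta> where "\<delta> = min (1/2) ((b2 / b - 1) / 2)"
  have \<delta>: "\<delta> > 0" "\<delta> \<le> 1/2" "b * (1 + 2 * \<delta>) \<le> b2"
    using b b2 unfolding \<delta>_def by (auto simp: field_simps min_def)
  show ?thesis
  proof (rule that[of M "nat \<lceil>b / \<delta>\<rceil>" "max N1 1"])
    show "M > 0" unfolding M_def using C b gap by simp
    fix d j assume d: "d \<ge> nat \<lceil>b / \<delta>\<rceil>" and j: "j \<ge> max N1 1"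
      and crossed: "real d * small_mass (real j) \<le> b"
    let ?s = "small_mass (real j)"
    have "real d \<ge> b / \<delta>" using d by linarith
    moreover have "b / \<delta> > 0" using b \<delta> by simp
    ultimately have d_pos: "real d > 0" by linarith
    have "b \<le> \<delta> * real d" using \<open>real d \<ge> b / \<delta>\<close> \<delta> by (simp add: field_simps)
    hence "?s * real d \<le> \<delta> * real d" using crossed by (simp add: mult.commute)
    hence s: "0 \<le> ?s" "?s \<le> \<delta>"
      using d_pos small_mass_nonneg mult_right_le_imp_le by auto
    have "real d * entropy_upto (real j) / (M * real j) \<le> real d * (C * real j * ?s) / (M * real j)"
      using entropy_le_small_mass_sum[of j] sum_bound[of j] j d_pos \<open>M > 0\<close>
      by (intro divide_right_mono mult_left_mono) auto
    also have "\<dots> = C * (real d * ?s) / M" using j by (simp add: field_simps)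
    also have "\<dots> \<le> C * b / M" using crossed C \<open>M > 0\<close> by (intro divide_right_mono mult_left_mono) auto
    also have "\<dots> = gap" unfolding M_def using C b gap by (simp add: field_simps)
    finally have entropy_small: "real d * entropy_upto (real j) / (M * real j) \<le> gap" .
    have "real d * (?s + 2 * ?s^2) = (real d * ?s) * (1 + 2 * ?s)"
      by (simp add: algebra_simps power2_eq_square)
    also have "\<dots> \<le> b * (1 + 2 * \<delta>)" using crossed s b by (intro mult_mono) auto
    also have "\<dots> \<le> b2" by (rule \<delta>(3))
    finally have "exp (- b2) \<le> (1 - ?s)^d"
      using one_minus_pow_ge_exp[of ?s d] s \<delta>(2) by (meson exp_le_cancel_iff neg_le_iff_le order.trans)
    show "real (n_X lam d \<epsilon>) \<le> exp (M * real j)"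
    proof (rule n_X_le_exp[where s = "real j" and t = "M * real j"])
      show "M * real j > 0" using j \<open>M > 0\<close> by simp
      show "1 - \<epsilon>^2 \<le> (1 - ?s)^d - real d * entropy_upto (real j) / (M * real j)"
        using \<open>exp (- b2) \<le> (1 - ?s)^d\<close> entropy_small eA unfolding gap_def by linarith
    qed
  qed
qed

lemma n_X_lower_at_level:
  assumes eps: "0 < \<epsilon>" and a: "exp (- a) < 1 - \<epsilon>^2"
    and large: "a \<le> real D * small_mass y"
  shows "(1 - \<epsilon>^2 - exp (- a)) * exp y \<le> real (n_X lam D \<epsilon>)"
proof (rule n_X_ge_exp[OF _ eps])
  have "(1 - small_mass y)^D \<le> exp (- (real D * small_mass y))"
    by (rule one_minus_pow_le_exp[OF small_mass_nonneg small_mass_le_1])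
  also have "\<dots> \<le> exp (- a)" using large by simp
  finally show "(1 - small_mass y)^D \<le> 1 - \<epsilon>^2 - (1 - \<epsilon>^2 - exp (- a))" by simp
qed (use a in simp)

text \<open>n_X grows without bound in d: apply the lower bound at a fixed level y for which
  the small mass is positive, with d large.\<close>

lemma n_X_tendsto_infinity:
  assumes eps: "0 < \<epsilon>" "\<epsilon> < 1"
  shows "filterlim (\<lambda>d. real (n_X lam d \<epsilon>)) at_top sequentially"
  unfolding filterlim_at_top
proof
  fix Z :: real
  define a where "a = 1 - ln (1 - \<epsilon>^2)"
  define \<eta> where "\<eta> = 1 - \<epsilon>^2 - exp (- a)"
  have e2: "0 < 1 - \<epsilon>^2" using eps by (simp add: power_less_one_iff)
  have "exp (- a) = (1 - \<epsilon>^2) / exp 1" unfolding a_def using e2 by (simp add: exp_diff)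
  also have "\<dots> < 1 - \<epsilon>^2" using e2 exp_gt_one[of 1] by (simp add: divide_less_eq)
  finally have ea: "exp (- a) < 1 - \<epsilon>^2" .
  hence \<eta>: "\<eta> > 0" unfolding \<eta>_def by simp
  define y where "y = max (max T 0) (ln (max Z 1 / \<eta>))"
  have y_pos: "small_mass y > 0" by (rule small_mass_pos) (simp add: y_def)
  have "max Z 1 / \<eta> = exp (ln (max Z 1 / \<eta>))" using \<eta> by simp
  also have "\<dots> \<le> exp y" unfolding y_def by simp
  finally have "max Z 1 / \<eta> \<le> exp y" .
  hence Z: "Z \<le> \<eta> * exp y" using \<eta> by (simp add: field_simps)
  have "\<forall>\<^sub>F d in sequentially. a / small_mass y \<le> real d"
    using filterlim_real_sequentially unfolding filterlim_at_top by blast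
  thus "\<forall>\<^sub>F d in sequentially. Z \<le> real (n_X lam d \<epsilon>)"
  proof eventually_elim
    case (elim d)
    hence "a \<le> real d * small_mass y" using y_pos by (simp add: field_simps)
    from n_X_lower_at_level[OF eps(1) ea this] show ?case using Z unfolding \<eta>_def by linarith
  qed
qed

text \<open>This is where slow variation
  enters: rescaling the level by 2 K costs only a factor r in the small mass.\<close>

lemma n_X_lower_at_crossing:
  assumes eps: "0 < \<epsilon>" "\<epsilon> < 1" and r: "r > 1" and K: "K > 0"
  obtains \<eta> jmin where "\<eta> > 0"
    "\<And>d D j. jmin \<le> j - 1 \<Longrightarrow> r^3 * real d \<le> real D \<Longrightarrow>
       - ln (1 - \<epsilon>^2) / r < real d * small_mass (real (j - 1)) \<Longrightarrow>
       \<eta> * exp (K * real j) \<le> real (n_X lam D \<epsilon>)"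
proof -
  define A where "A = - ln (1 - \<epsilon>^2)"
  have e2: "0 < 1 - \<epsilon>^2" using eps by (simp add: power_less_one_iff)
  have A: "A > 0" "exp (- A) = 1 - \<epsilon>^2" unfolding A_def using eps e2 by (simp_all add: power_less_one_iff)
  have "A < A * r" using A r by simp
  hence "exp (- (A * r)) < exp (- A)" by simp
  hence ea: "exp (- (A * r)) < 1 - \<epsilon>^2" using A(2) by simp
  obtain X1 where ratio: "\<And>x. x \<ge> X1 \<Longrightarrow> 1 / r * small_mass x \<le> small_mass (2 * K * x)"
    using small_mass_ratio[of "2 * K" "1 / r"] K r unfolding eventually_at_top_linorder by auto
  show ?thesis
  proof (rule that[of "1 - \<epsilon>^2 - exp (- (A * r))" "max (nat \<lceil>X1\<rceil>) 1"])
    show "1 - \<epsilon>^2 - exp (- (A * r)) > 0" using ea by simp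
    fix d D j assume j: "max (nat \<lceil>X1\<rceil>) 1 \<le> j - 1" and D: "r^3 * real d \<le> real D"
      and crossed: "- ln (1 - \<epsilon>^2) / r < real d * small_mass (real (j - 1))"
    have j1: "real (j - 1) = real j - 1" "real j - 1 \<ge> X1" "real j \<ge> 2" using j by auto
    have "1 / r * small_mass (real j - 1) \<le> small_mass (2 * K * (real j - 1))"
      by (rule ratio[OF j1(2)])
    also have "\<dots> \<le> small_mass (K * real j)"
      using K j1(3) by (intro small_mass_antimono) (simp add: algebra_simps)
    finally have shift: "1 / r * small_mass (real j - 1) \<le> small_mass (K * real j)" .
    have "A * r = r^2 * (A / r)" using r by (simp add: power2_eq_square)
    also have "\<dots> \<le> r^2 * (real d * small_mass (real j - 1))"
      using crossed j1(1) r unfolding A_def by (intro mult_left_mono) auto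
    also have "\<dots> = r^3 * real d * (1 / r * small_mass (real j - 1))"
      using r by (simp add: power_def field_simps)
    also have "\<dots> \<le> real D * small_mass (K * real j)"
      using D shift r small_mass_nonneg by (intro mult_mono) auto
    finally show "(1 - \<epsilon>^2 - exp (- (A * r))) * exp (K * real j) \<le> real (n_X lam D \<epsilon>)"
      by (rule n_X_lower_at_level[OF eps(1) ea])
  qed
qed


lemma eventually_crossing_level:
  assumes b: "b > 0" and J0: "max T 0 \<le> real J0"
  shows "\<forall>\<^sub>F d in sequentially. \<exists>j>J0.
    real d * small_mass (real j) \<le> b \<and> b < real d * small_mass (real (j - 1))"
proof -
  have pos: "small_mass (real J0) > 0" by (rule small_mass_pos[OF J0])
  have "\<forall>\<^sub>F d in sequentially. b / small_mass (real J0) < real d"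
    using filterlim_real_sequentially unfolding filterlim_at_top_dense by blast
  thus ?thesis
  proof eventually_elim
    case (elim d)
    hence above: "b < real d * small_mass (real J0)"
      by (simp only: pos_divide_less_eq[OF pos])
    have "((\<lambda>j. real d * small_mass (real j)) \<longlongrightarrow> real d * 0) sequentially"
      by (intro tendsto_mult_left filterlim_compose[OF small_mass_tendsto_0 filterlim_real_sequentially])
    hence "\<forall>\<^sub>F j in sequentially. real d * small_mass (real j) < b"
      using b by (intro order_tendstoD(2)) auto
    hence "\<forall>\<^sub>F j in sequentially. real d * small_mass (real j) \<le> b"
      by (rule eventually_mono) simp
    from crossing_index[where p = "\<lambda>j. real d * small_mass (real j)", OF above this]
    show ?case by blast
  qed
qed

text \<open>For d large, let j be the level where d times the small mass crosses
  A / r, with A = - ln (1 - eps^2) and r = c^(1/4).  Then ln n_X(d) \<le> M j, while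
  ln n_X(\<lfloor>c d\<rfloor>) \<ge> ln \<eta> + K j with K arbitrary; so ln n_X(\<lfloor>c d\<rfloor>) eventually dominates
  any multiple of ln n_X(d).\<close>

lemma log_n_X_dominates:
  assumes eps: "0 < \<epsilon>" "\<epsilon> < 1" and c: "c > 1"
  shows "\<forall>\<^sub>F d in sequentially.
    Z * ln (real (n_X lam d \<epsilon>)) \<le> ln (real (n_X lam (nat \<lfloor>c * real d\<rfloor>) \<epsilon>))"
proof -
  define A where "A = - ln (1 - \<epsilon>^2)"
  have A: "A > 0" unfolding A_def using eps by (simp add: power_less_one_iff)
  define r where "r = sqrt (sqrt c)"
  have r2: "r^2 = sqrt c" unfolding r_def using c by simp
  have "r^4 = (r^2)^2" by (simp add: eval_nat_numeral)
  hence r4: "r^4 = c" unfolding r2 using c by simp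
  have r1: "r > 1" unfolding r_def using c by simp
  have r: "r > 1" "r^3 < c" using r1 power_strict_increasing[of 3 4 r] r4 by auto
  have b: "0 < A / r" "A / r < - ln (1 - \<epsilon>^2)"
    using A r by (auto simp: divide_less_eq A_def[symmetric])
  then obtain M dmin jmin where M: "M > 0" and upper: "\<And>d j. d \<ge> dmin \<Longrightarrow> j \<ge> jmin \<Longrightarrow>
      real d * small_mass (real j) \<le> A / r \<Longrightarrow> real (n_X lam d \<epsilon>) \<le> exp (M * real j)"
    using n_X_upper_at_level[OF eps] by blast
  define K where "K = M * (\<bar>Z\<bar> + 1)"
  have K: "K > 0" unfolding K_def using M by (simp add: add_pos_nonneg)
  obtain \<eta> jmin' where \<eta>: "\<eta> > 0" and lower: "\<And>d D j. jmin' \<le> j - 1 \<Longrightarrow> r^3 * real d \<le> real D \<Longrightarrow>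
      A / r < real d * small_mass (real (j - 1)) \<Longrightarrow> \<eta> * exp (K * real j) \<le> real (n_X lam D \<epsilon>)"
    using n_X_lower_at_crossing[OF eps r(1) K] unfolding A_def by metis
  define J0 where "J0 = max (max jmin jmin') (max (nat \<lceil>max T 0\<rceil>) (nat \<lceil>- ln \<eta> / M\<rceil>))"
  have "max T 0 \<le> real (nat \<lceil>max T 0\<rceil>)" "- ln \<eta> / M \<le> real (nat \<lceil>- ln \<eta> / M\<rceil>)"
    by linarith+
  moreover have "nat \<lceil>max T 0\<rceil> \<le> J0" "nat \<lceil>- ln \<eta> / M\<rceil> \<le> J0"
    unfolding J0_def by (meson max.cobounded1 max.cobounded2 max.coboundedI2)+
  ultimately have J0: "max T 0 \<le> real J0" "- ln \<eta> / M \<le> real J0"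
    by (meson of_nat_le_iff order_trans)+
  have J0_eta: "- ln \<eta> \<le> M * real J0"
    using J0(2) by (simp only: pos_divide_le_eq[OF M] mult.commute)
  have J0_le: "jmin \<le> j" "jmin' \<le> j - 1" if "J0 < j" for j
    using that unfolding J0_def by auto
  have "\<forall>\<^sub>F d in sequentially. dmin \<le> d \<and>
      (\<exists>j>J0. real d * small_mass (real j) \<le> A / r \<and> A / r < real d * small_mass (real (j - 1))) \<and>
      r^3 * real d \<le> real (nat \<lfloor>c * real d\<rfloor>)"
    using eventually_ge_at_top[of dmin] eventually_crossing_level[OF b(1) J0(1)]
      eventually_floor_scaled_ge[OF r(2)]
    by eventually_elim (intro conjI; assumption)
  thus ?thesis
  proof eventually_elim
    case (elim d)
    then obtain j where j: "J0 < j" "real d * small_mass (real j) \<le> A / r"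
      "A / r < real d * small_mass (real (j - 1))" by blast
    have "real (n_X lam d \<epsilon>) \<le> exp (M * real j)"
      using elim by (intro upper[OF _ J0_le(1)[OF j(1)] j(2)]) simp
    hence log_d: "ln (real (n_X lam d \<epsilon>)) \<le> M * real j" using M by (intro ln_nat_le_of_le_exp) auto
    have "\<eta> * exp (K * real j) \<le> real (n_X lam (nat \<lfloor>c * real d\<rfloor>) \<epsilon>)"
      using elim by (intro lower[OF J0_le(2)[OF j(1)] _ j(3)]) simp
    hence log_D: "ln \<eta> + K * real j \<le> ln (real (n_X lam (nat \<lfloor>c * real d\<rfloor>) \<epsilon>))"
      by (rule ln_ge_of_mult_exp_le[OF \<eta>])
    have "M * real J0 \<le> M * real j" using j(1) M by simp
    have "Z * ln (real (n_X lam d \<epsilon>)) \<le> \<bar>Z\<bar> * ln (real (n_X lam d \<epsilon>))"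
      by (rule mult_right_mono[OF abs_ge_self ln_real_nat_nonneg])
    also have "\<dots> \<le> \<bar>Z\<bar> * (M * real j)" by (rule mult_left_mono[OF log_d abs_ge_zero])
    also have "\<dots> = K * real j - M * real j" unfolding K_def by (simp add: algebra_simps)
    also have "\<dots> \<le> ln \<eta> + K * real j"
      using J0_eta \<open>M * real J0 \<le> M * real j\<close> by linarith
    finally show ?case using log_D by linarith
  qed
qed

text \<open>Since ln n_X(d) is eventually positive, the domination estimate is exactly rapid
  variation of ln n_X.\<close>

lemma log_n_X_rapidly_varying:
  assumes eps: "0 < \<epsilon>" "\<epsilon> < 1" and c: "c > 1"
  shows "filterlim (\<lambda>d. ln (real (n_X lam (nat \<lfloor>c * real d\<rfloor>) \<epsilon>)) / ln (real (n_X lam d \<epsilon>)))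
    at_top sequentially"
  unfolding filterlim_at_top
proof
  fix Z :: real
  have "\<forall>\<^sub>F d in sequentially. 2 \<le> real (n_X lam d \<epsilon>)"
    using n_X_tendsto_infinity[OF eps] unfolding filterlim_at_top by blast
  with log_n_X_dominates[OF eps c, of Z]
  show "\<forall>\<^sub>F d in sequentially. Z \<le> ln (real (n_X lam (nat \<lfloor>c * real d\<rfloor>) \<epsilon>)) / ln (real (n_X lam d \<epsilon>))"
    by eventually_elim (simp add: pos_le_divide_eq)
qed

end

theorem corollary1:
  fixes lam :: "nat \<Rightarrow> real"
  assumes nonneg: "\<And>k. lam k \<ge> 0"
    and noninc: "decseq lam"
    and summ: "summable lam"
    and pos: "lam 0 > 0"
    and sv: "\<exists>\<phi> T. slowly_varying T \<phi> \<and>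
       (\<forall>x\<ge>0. (\<Sum>k. norm_ev lam k * (if norm_ev lam k < exp (- x) then 1 else 0)) = \<phi> x)"
  shows "\<forall>\<epsilon>. 0 < \<epsilon> \<and> \<epsilon> < 1 \<longrightarrow> (\<forall>c::real. c > 1 \<longrightarrow>
     filterlim (\<lambda>d. ln (real (n_X lam (nat \<lfloor>c * real d\<rfloor>) \<epsilon>)) / ln (real (n_X lam d \<epsilon>)))
       at_top sequentially)"
proof -
  interpret eigen_seq lam using nonneg summ pos by unfold_locales
  obtain \<phi> T where "slowly_varying T \<phi>" and "\<forall>x\<ge>0. small_mass x = \<phi> x"
    using sv unfolding small_mass_def by blast
  then interpret sv_eigen_seq lam \<phi> T by unfold_locales auto
  show ?thesis using log_n_X_rapidly_varying by blast
qed

end
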